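(* If $G$ is a graph that has a min-max clique covering with simple intersection, then both $G$ and its compressed cliques graph $\mathcal{C}(G)$ are claw-free (contain no induced subgraph isomorphic to $K_{1,3}$).
   Context: A clique covering of a graph is a set of cliques such that every edge lies in at least one of them; $\operatorname{cc}(G)$ is its minimum size. A min-max clique covering is a clique covering of size $\operatorname{cc}(G)$ consisting of maximal cliques; it has simple intersection if no three distinct cliques of it share a vertex. Given such a covering $\{C_1,\dots,C_\ell\}$, put $C_{i,j}=C_i\cap C_j$ ($i\ne j$) and $C_{i,i}=C_i\setminus\bigcup_{j\ne i}C_j$; the compressed cliques graph $\mathcal{C}(G)$ has a vertex $v_{i,j}$ for each non-empty $C_{i,j}$ (including $i=j$), with $v_{i,j}\sim v_{i',j'}$ iff $\{i,j\}\cap\{i',j'\}\ne\emptyset$. *)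

theory Defs
  imports Main
begin

definition graph :: "'a set \<Rightarrow> ('a \<Rightarrow> 'a \<Rightarrow> bool) \<Rightarrow> bool" where
  "graph V E \<longleftrightarrow> finite V \<and> (\<forall>x y. E x y \<longrightarrow> x \<in> V \<and> y \<in> V)
     \<and> (\<forall>x y. E x y \<longrightarrow> E y x) \<and> (\<forall>x. \<not> E x x)"

definition clique :: "'a set \<Rightarrow> ('a \<Rightarrow> 'a \<Rightarrow> bool) \<Rightarrow> 'a set \<Rightarrow> bool" where
  "clique V E K \<longleftrightarrow> K \<subseteq> V \<and> (\<forall>x\<in>K. \<forall>y\<in>K. x \<noteq> y \<longrightarrow> E x y)"

definition maximal_clique :: "'a set \<Rightarrow> ('a \<Rightarrow> 'a \<Rightarrow> bool) \<Rightarrow> 'a set \<Rightarrow> bool" where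
  "maximal_clique V E K \<longleftrightarrow> clique V E K \<and>
     (\<forall>K'. clique V E K' \<and> K \<subseteq> K' \<longrightarrow> K' = K)"

definition clique_covering :: "'a set \<Rightarrow> ('a \<Rightarrow> 'a \<Rightarrow> bool) \<Rightarrow> 'a set set \<Rightarrow> bool" where
  "clique_covering V E \<C> \<longleftrightarrow> finite \<C> \<and> (\<forall>K\<in>\<C>. clique V E K) \<and>
     (\<forall>x y. E x y \<longrightarrow> (\<exists>K\<in>\<C>. x \<in> K \<and> y \<in> K))"

definition cc :: "'a set \<Rightarrow> ('a \<Rightarrow> 'a \<Rightarrow> bool) \<Rightarrow> nat" where
  "cc V E = (LEAST n. \<exists>\<C>. clique_covering V E \<C> \<and> card \<C> = n)"

definition min_max_clique_covering :: "'a set \<Rightarrow> ('a \<Rightarrow> 'a \<Rightarrow> bool) \<Rightarrow> 'a set set \<Rightarrow> bool" where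
  "min_max_clique_covering V E \<C> \<longleftrightarrow> clique_covering V E \<C> \<and> card \<C> = cc V E \<and>
     (\<forall>K\<in>\<C>. maximal_clique V E K)"

definition simple_intersection :: "'a set set \<Rightarrow> bool" where
  "simple_intersection \<C> \<longleftrightarrow> (\<forall>A\<in>\<C>. \<forall>B\<in>\<C>. \<forall>C\<in>\<C>.
     A \<noteq> B \<and> A \<noteq> C \<and> B \<noteq> C \<longrightarrow> A \<inter> B \<inter> C = {})"

definition cpart :: "'a set set \<Rightarrow> 'a set \<Rightarrow> 'a set \<Rightarrow> 'a set" where
  "cpart \<C> A B = (if A = B then A - \<Union>(\<C> - {A}) else A \<inter> B)"

text \<open>Compressed cliques graph: vertices are the unordered pairs {A,B} (A = B allowed)
of cliques of the covering with non-empty C_{A,B}; two distinct such vertices are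
adjacent iff the pairs share an index.\<close>
definition cc_vertices :: "'a set set \<Rightarrow> 'a set set set" where
  "cc_vertices \<C> = {P. \<exists>A\<in>\<C>. \<exists>B\<in>\<C>. P = {A, B} \<and> cpart \<C> A B \<noteq> {}}"

definition cc_edge :: "'a set set \<Rightarrow> 'a set set \<Rightarrow> 'a set set \<Rightarrow> bool" where
  "cc_edge \<C> P Q \<longleftrightarrow> P \<in> cc_vertices \<C> \<and> Q \<in> cc_vertices \<C> \<and> P \<noteq> Q \<and> P \<inter> Q \<noteq> {}"

definition claw_free :: "'a set \<Rightarrow> ('a \<Rightarrow> 'a \<Rightarrow> bool) \<Rightarrow> bool" where
  "claw_free V E \<longleftrightarrow> \<not> (\<exists>x\<in>V. \<exists>a\<in>V. \<exists>b\<in>V. \<exists>c\<in>V.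
     distinct [x, a, b, c] \<and> E x a \<and> E x b \<and> E x c \<and>
     \<not> E a b \<and> \<not> E a c \<and> \<not> E b c)"

end

theory Submission
  imports Defs
begin

text \<open>A claw with centre x has three pairwise non-adjacent leaves; the three covering cliques
  through the edges at x are pairwise distinct (two leaves in one clique would be adjacent),
  so they share x, against simple intersection. In the compressed cliques graph a vertex
  is a pair {i, j}, and it cannot meet three pairwise disjoint pairs.\<close>

lemma claw_free_if_simple_intersection_covering:
  assumes "clique_covering V E \<C>" and "simple_intersection \<C>"
  shows "claw_free V E"
  unfolding claw_free_def
proof
  assume "\<exists>x\<in>V. \<exists>a\<in>V. \<exists>b\<in>V. \<exists>c\<in>V. distinct [x, a, b, c] \<and> E x a \<and> E x b \<and> E x c \<and>
    \<not> E a b \<and> \<not> E a c \<and> \<not> E b c"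
  then obtain x a b c where distinct: "distinct [x, a, b, c]"
    and edges: "E x a" "E x b" "E x c"
    and non_edges: "\<not> E a b" "\<not> E a c" "\<not> E b c"
    by blast
  from assms(1) edges obtain Ka Kb Kc where in_cover: "Ka \<in> \<C>" "Kb \<in> \<C>" "Kc \<in> \<C>"
    and members: "x \<in> Ka" "a \<in> Ka" "x \<in> Kb" "b \<in> Kb" "x \<in> Kc" "c \<in> Kc"
    unfolding clique_covering_def by metis
  have "clique V E K" if "K \<in> \<C>" for K
    using assms(1) that unfolding clique_covering_def by blast
  with in_cover members distinct non_edges have "Ka \<noteq> Kb" "Ka \<noteq> Kc" "Kb \<noteq> Kc"
    unfolding clique_def by auto
  with assms(2) in_cover members show False
    unfolding simple_intersection_def by blast
qed

lemma claw_free_intersection_graph_of_pairs: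
  assumes pairs: "\<And>P. P \<in> V \<Longrightarrow> \<exists>A B. P = {A, B}"
    and intersection_graph: "\<And>P Q. E P Q \<longleftrightarrow> P \<in> V \<and> Q \<in> V \<and> P \<noteq> Q \<and> P \<inter> Q \<noteq> {}"
  shows "claw_free V E"
  unfolding claw_free_def
proof
  assume "\<exists>x\<in>V. \<exists>a\<in>V. \<exists>b\<in>V. \<exists>c\<in>V. distinct [x, a, b, c] \<and> E x a \<and> E x b \<and> E x c \<and>
    \<not> E a b \<and> \<not> E a c \<and> \<not> E b c"
  then obtain x a b c where "x \<in> V" "a \<in> V" "b \<in> V" "c \<in> V" "distinct [x, a, b, c]"
    and edges: "E x a" "E x b" "E x c"
    and non_edges: "\<not> E a b" "\<not> E a c" "\<not> E b c"
    by blast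
  then have "a \<inter> b = {}" "a \<inter> c = {}" "b \<inter> c = {}"
    using intersection_graph by auto
  moreover have "x \<inter> a \<noteq> {}" "x \<inter> b \<noteq> {}" "x \<inter> c \<noteq> {}"
    using edges intersection_graph by auto
  moreover obtain A B where "x = {A, B}"
    using pairs \<open>x \<in> V\<close> by blast
  ultimately show False by blast
qed

theorem mainTheorem10:
  fixes V :: "'a set" and E :: "'a \<Rightarrow> 'a \<Rightarrow> bool" and \<C> :: "'a set set"
  assumes "graph V E"
    and "min_max_clique_covering V E \<C>"
    and "simple_intersection \<C>"
  shows "claw_free V E \<and> claw_free (cc_vertices \<C>) (cc_edge \<C>)"
proof
  have "clique_covering V E \<C>"
    using assms(2) unfolding min_max_clique_covering_def by blast
  then show "claw_free V E"
    using assms(3) by (rule claw_free_if_simple_intersection_covering)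
  show "claw_free (cc_vertices \<C>) (cc_edge \<C>)"
    by (rule claw_free_intersection_graph_of_pairs)
      (auto simp: cc_vertices_def cc_edge_def)
qed

end
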